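(* Let $\mathbf{M}$ be a nonsingular $D\times D$ integer matrix and $\bm{\Gamma}_1,\dots,\bm{\Gamma}_L$ ($L\ge2$) nonsingular $D\times D$ integer matrices that are pairwise commutative and coprime; set $\mathbf{M}_i=\mathbf{M}\bm{\Gamma}_i$. Fix unimodular $\mathbf{U}_1$ and let $\mathbf{m}\in\mathcal{A}_1$ with remainders $\mathbf{r}_i=\langle\mathbf{m}\rangle_{\mathbf{M}_i}$ and folding vectors $\mathbf{n}_i$ (so $\mathbf{m}=\mathbf{M}_i\mathbf{n}_i+\mathbf{r}_i$). Let $\widetilde{\mathbf{r}}_i=\mathbf{r}_i+\triangle\mathbf{r}_i\in\mathbb{Z}^D$ be erroneous remainders, and let $\widetilde{\mathbf{n}}_1,\dots,\widetilde{\mathbf{n}}_L$ be the output of Algorithm 1 applied to $\widetilde{\mathbf{r}}_1,\dots,\widetilde{\mathbf{r}}_L$. Define $\bm{\theta}_i=Q_{\mathbf{M}}(\triangle\mathbf{r}_i-\triangle\mathbf{r}_1)$ for $2\le i\le L$. Then $\widetilde{\mathbf{n}}_i=\mathbf{n}_i$ for all $1\le i\le L$ if and only if $\bm{\theta}_i=\mathbf{0}$ for all $2\le i\le L$. Moreover: (1) if $\lVert\triangle\mathbf{r}_i-\triangle\mathbf{r}_1\rVert<\lambda_{\mathrm{LAT}(\mathbf{M})}/2$ for all $2\le i\le L$, then $\bm{\theta}_i=\mathbf{0}$ for all $i\ge2$; (2) if $\lVert\triangle\mathbf{r}_i\rVert\le\tau$ for all $i$ and $\tau<\lambda_{\mathrm{LAT}(\mathbf{M})}/4$,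 then $\bm{\theta}_i=\mathbf{0}$ for all $i\ge2$. When the folding vectors are correctly determined, $\widetilde{\mathbf{m}}=\frac1L\sum_{i=1}^L(\mathbf{M}_i\mathbf{n}_i+\widetilde{\mathbf{r}}_i)$ satisfies $\lVert\widetilde{\mathbf{m}}-\mathbf{m}\rVert\le\tau$ whenever $\lVert\triangle\mathbf{r}_i\rVert\le\tau$ for all $i$.
   Context: All matrices are $D\times D$; unimodular means integer with determinant $\pm1$; commuting nonsingular integer matrices are coprime if all their common left (equivalently right) divisors are unimodular. $\mathrm{LAT}(\mathbf{M})=\{\mathbf{M}\mathbf{n}:\mathbf{n}\in\mathbb{Z}^D\}$. $\mathcal{N}(\mathbf{A})=\{\mathbf{k}\in\mathbb{Z}^D:\mathbf{k}=\mathbf{A}\mathbf{x},\ \mathbf{x}\in[0,1)^D\}$; $\langle\mathbf{m}\rangle_{\mathbf{A}}$ is the unique $\mathbf{r}\in\mathcal{N}(\mathbf{A})$ with $\mathbf{m}-\mathbf{r}\in\mathrm{LAT}(\mathbf{A})$; $\mathbf{x}\equiv\mathbf{y}\bmod\mathbf{A}$ means $\mathbf{x}-\mathbf{y}\in\mathrm{LAT}(\mathbf{A})$. $\mathcal{A}_1=\{\mathbf{m}\in\mathbb{Z}^D:\lfloor\mathbf{M}_1^{-1}\mathbf{m}\rfloor\in\mathcal{N}(\bm{\Gamma}_2\bm{\Gamma}_3\cdots\bm{\Gamma}_L\mathbf{U}_1)\}$ (componentwise floor). $\lVert\cdot\rVert$ is a fixed norm on $\mathbb{R}^D$; $\lambda_{\mathrm{LAT}(\mathbf{M})}=\min\{\lVert\mathbf{v}\rVert:\mathbf{v}\in\mathrm{LAT}(\mathbf{M})\setminus\{\mathbf{0}\}\}$.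 $Q_{\mathbf{M}}:\mathbb{R}^D\to\mathrm{LAT}(\mathbf{M})$ is a fixed closest-lattice-point map, $Q_{\mathbf{M}}(\mathbf{w})\in\arg\min_{\mathbf{v}\in\mathrm{LAT}(\mathbf{M})}\lVert\mathbf{v}-\mathbf{w}\rVert$, chosen so that $Q_{\mathbf{M}}(\mathbf{w}+\mathbf{l})=Q_{\mathbf{M}}(\mathbf{w})+\mathbf{l}$ for $\mathbf{l}\in\mathrm{LAT}(\mathbf{M})$. Algorithm 1: (i) $\mathbf{v}_i=Q_{\mathbf{M}}(\widetilde{\mathbf{r}}_i-\widetilde{\mathbf{r}}_1)$, $2\le i\le L$; (ii) $\bm{\zeta}_i=\langle\mathbf{M}^{-1}\mathbf{v}_i\rangle_{\bm{\Gamma}_i}$; (iii) $\bm{\chi}_1$ is the unique element of $\mathcal{N}(\bm{\Gamma}_1\bm{\Gamma}_2\cdots\bm{\Gamma}_L\mathbf{U}_1)$ with $\bm{\chi}_1\equiv\mathbf{0}\bmod\bm{\Gamma}_1$ and $\bm{\chi}_1\equiv\bm{\zeta}_i\bmod\bm{\Gamma}_i$ for $2\le i\le L$; (iv) $\widetilde{\mathbf{n}}_1=\bm{\Gamma}_1^{-1}\bm{\chi}_1$ and $\widetilde{\mathbf{n}}_i=\bm{\Gamma}_i^{-1}(\bm{\chi}_1-\mathbf{M}^{-1}\mathbf{v}_i)$ for $2\le i\le L$. *)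

theory Defs
  imports "HOL-Analysis.Analysis"
begin

text \<open>Integer D x D matrices are int^'d^'d, integer vectors int^'d (D = CARD('d)).\<close>

definition rvec :: "int^'d \<Rightarrow> real^'d" where
  "rvec v = (\<chi> i. real_of_int (v $ i))"

definition rmat :: "int^'d^'d \<Rightarrow> real^'d^'d" where
  "rmat A = (\<chi> i j. real_of_int (A $ i $ j))"

definition nonsingular :: "int^'d^'d \<Rightarrow> bool" where
  "nonsingular A \<longleftrightarrow> det A \<noteq> 0"

definition unimodular :: "int^'d^'d \<Rightarrow> bool" where
  "unimodular U \<longleftrightarrow> det U = 1 \<or> det U = -1"

definition coprime_mat :: "int^'d^'d \<Rightarrow> int^'d^'d \<Rightarrow> bool" where
  "coprime_mat A B \<longleftrightarrow>
     (\<forall>Dv X Y. A = Dv ** X \<and> B = Dv ** Y \<longrightarrow> unimodular Dv)"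

definition LAT :: "int^'d^'d \<Rightarrow> (int^'d) set" where
  "LAT A = {A *v n | n. True}"

definition NN :: "int^'d^'d \<Rightarrow> (int^'d) set" where
  "NN A = {k. \<exists>x::real^'d. (\<forall>j. 0 \<le> x $ j \<and> x $ j < 1) \<and> rvec k = rmat A *v x}"

definition congr_mod :: "int^'d \<Rightarrow> int^'d \<Rightarrow> int^'d^'d \<Rightarrow> bool" where
  "congr_mod x y A \<longleftrightarrow> x - y \<in> LAT A"

definition remd :: "int^'d \<Rightarrow> int^'d^'d \<Rightarrow> int^'d" where
  "remd m A = (THE r. r \<in> NN A \<and> m - r \<in> LAT A)"

text \<open>Ordered product Gamma a ** Gamma (a+1) ** ... ** Gamma b (identity if b < a).\<close>
definition mprod :: "(nat \<Rightarrow> int^'d^'d) \<Rightarrow> nat \<Rightarrow> nat \<Rightarrow> int^'d^'d" where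
  "mprod G a b = foldr (\<lambda>i A. G i ** A) [a..<Suc b] (mat 1)"

definition A1set :: "int^'d^'d \<Rightarrow> (nat \<Rightarrow> int^'d^'d) \<Rightarrow> nat \<Rightarrow> int^'d^'d \<Rightarrow> (int^'d) set" where
  "A1set M G L U1 = {m. (\<chi> j. \<lfloor>(matrix_inv (rmat (M ** G 1)) *v rvec m) $ j\<rfloor>)
                          \<in> NN (mprod G 2 L ** U1)}"

definition is_norm :: "(real^'d \<Rightarrow> real) \<Rightarrow> bool" where
  "is_norm nrm \<longleftrightarrow> (\<forall>x. nrm x = 0 \<longleftrightarrow> x = 0) \<and> (\<forall>a x. nrm (a *\<^sub>R x) = \<bar>a\<bar> * nrm x)
      \<and> (\<forall>x y. nrm (x + y) \<le> nrm x + nrm y)"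

definition lat_min :: "(real^'d \<Rightarrow> real) \<Rightarrow> int^'d^'d \<Rightarrow> real" where
  "lat_min nrm M = Inf {nrm (rvec v) | v. v \<in> LAT M \<and> v \<noteq> 0}"

definition is_closest_map :: "(real^'d \<Rightarrow> real) \<Rightarrow> int^'d^'d \<Rightarrow> (real^'d \<Rightarrow> real^'d) \<Rightarrow> bool" where
  "is_closest_map nrm M Q \<longleftrightarrow>
     (\<forall>w. Q w \<in> rvec ` LAT M) \<and>
     (\<forall>w. \<forall>v\<in>LAT M. nrm (Q w - w) \<le> nrm (rvec v - w)) \<and>
     (\<forall>w l. l \<in> LAT M \<longrightarrow> Q (w + rvec l) = Q w + rvec l)"

definition lat_coords :: "int^'d^'d \<Rightarrow> real^'d \<Rightarrow> int^'d" where
  "lat_coords M v = (THE n. rvec (M *v n) = v)"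

definition alg_v :: "(real^'d \<Rightarrow> real^'d) \<Rightarrow> (nat \<Rightarrow> int^'d) \<Rightarrow> nat \<Rightarrow> real^'d" where
  "alg_v Q rt i = Q (rvec (rt i - rt 1))"

definition alg_chi :: "(real^'d \<Rightarrow> real^'d) \<Rightarrow> int^'d^'d \<Rightarrow> (nat \<Rightarrow> int^'d^'d) \<Rightarrow> nat
     \<Rightarrow> int^'d^'d \<Rightarrow> (nat \<Rightarrow> int^'d) \<Rightarrow> int^'d" where
  "alg_chi Q M G L U1 rt = (THE chi. chi \<in> NN (mprod G 1 L ** U1) \<and> congr_mod chi 0 (G 1) \<and>
      (\<forall>i\<in>{2..L}. congr_mod chi (remd (lat_coords M (alg_v Q rt i)) (G i)) (G i)))"

definition alg1 :: "(real^'d \<Rightarrow> real^'d) \<Rightarrow> int^'d^'d \<Rightarrow> (nat \<Rightarrow> int^'d^'d) \<Rightarrow> nat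
     \<Rightarrow> int^'d^'d \<Rightarrow> (nat \<Rightarrow> int^'d) \<Rightarrow> nat \<Rightarrow> real^'d" where
  "alg1 Q M G L U1 rt i =
     (if i = 1 then matrix_inv (rmat (G 1)) *v rvec (alg_chi Q M G L U1 rt)
      else matrix_inv (rmat (G i)) *v rvec (alg_chi Q M G L U1 rt - lat_coords M (alg_v Q rt i)))"

end

theory Submission
  imports Defs "HOL-Number_Theory.Cong"
begin

text \<open>Since m = M_i n_i + r_i for every i, the differences r_i - r_1 = M (\<Gamma>_1 n_1 - \<Gamma>_i n_i) are
  lattice points, so translation equivariance of Q gives v_i = M (\<Gamma>_1 n_1 - \<Gamma>_i n_i) + \<theta>_i.
  If all \<theta>_i vanish, \<Gamma>_1 n_1 satisfies the congruences of step (iii) and lies in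
  N(\<Gamma>_1 \<cdots> \<Gamma>_L U_1) because m \<in> A_1; by the Chinese remainder theorem for matrices,
  LAT(\<Gamma>_1) \<inter> ... \<inter> LAT(\<Gamma>_L) = LAT(\<Gamma>_1 \<cdots> \<Gamma>_L), it is the only such point, hence
  \<chi>_1 = \<Gamma>_1 n_1 and step (iv) returns the true folding vectors. Conversely, correct outputs force
  v_i to be that lattice point, i.e. \<theta>_i = 0. The error bounds hold because the closest lattice
  point to a vector shorter than \<lambda>/2 is 0, and the averaged estimate differs from m by the mean
  of the errors.

  Coprimality of \<Gamma>_i and \<Gamma>_j means that no
  nonzero row vector annihilates both modulo a prime p (otherwise they have a common left divisor
  of determinant p). If a \<in> LAT(\<Gamma>_j) failed, a minimal multiple q a \<in> LAT(\<Gamma>_j) would yield a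
  common right null vector modulo a prime factor of q, and for commuting matrices a common right
  null vector modulo p produces a common left one, via idempotent powers.\<close>

section \<open>Integer matrices viewed over the reals\<close>

lemma rvec_nth [simp]: "rvec x $ i = real_of_int (x $ i)"
  by (simp add: rvec_def)

lemma rmat_nth [simp]: "rmat A $ i $ j = real_of_int (A $ i $ j)"
  by (simp add: rmat_def)

lemma rvec_0 [simp]: "rvec 0 = 0"
  by (simp add: vec_eq_iff)

lemma rvec_add: "rvec (x + y) = rvec x + rvec y"
  by (simp add: vec_eq_iff)

lemma rvec_diff: "rvec (x - y) = rvec x - rvec y"
  by (simp add: vec_eq_iff)

lemma rvec_eq_iff [simp]: "rvec x = rvec y \<longleftrightarrow> x = y"
  by (simp add: vec_eq_iff)

lemma rvec_eq_0_iff [simp]: "rvec x = 0 \<longleftrightarrow> x = 0"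
  by (simp add: vec_eq_iff)

lemma rmat_mult_rvec: "rmat A *v rvec x = rvec (A *v x)"
  by (simp add: vec_eq_iff matrix_vector_mult_def)

lemma rmat_mult: "rmat (A ** B) = rmat A ** rmat B"
  by (simp add: vec_eq_iff matrix_matrix_mult_def)

lemma det_rmat: "det (rmat A) = real_of_int (det A)"
  by (simp add: det_def of_int_sum of_int_prod)

lemma matrix_inv_rmat:
  fixes A :: "int^'n^'n"
  assumes "det A \<noteq> 0"
  shows "matrix_inv (rmat A) ** rmat A = mat 1" "rmat A ** matrix_inv (rmat A) = mat 1"
proof -
  have "invertible (rmat A)" using assms by (simp add: det_rmat invertible_det_nz)
  then have "rmat A ** matrix_inv (rmat A) = mat 1 \<and> matrix_inv (rmat A) ** rmat A = mat 1"
    unfolding invertible_def matrix_inv_def by (rule someI_ex)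
  then show "matrix_inv (rmat A) ** rmat A = mat 1" "rmat A ** matrix_inv (rmat A) = mat 1"
    by auto
qed

lemma matrix_inv_rmat_cancel:
  fixes A :: "int^'n^'n"
  assumes "det A \<noteq> 0"
  shows "matrix_inv (rmat A) *v (rmat A *v x) = x"
  using matrix_inv_rmat[OF assms] by (simp add: matrix_vector_mul_assoc)

lemma matrix_vector_mult_cancel_int:
  fixes A :: "int^'n^'n"
  assumes "det A \<noteq> 0" and "A *v x = A *v y"
  shows "x = y"
  using matrix_inv_rmat_cancel[OF assms(1), of "rvec x"] matrix_inv_rmat_cancel[OF assms(1), of "rvec y"]
    assms(2) by (simp add: rmat_mult_rvec)

lemma matrix_inv_rmat_eq_rvec_iff:
  fixes A :: "int^'n^'n"
  assumes "det A \<noteq> 0"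
  shows "matrix_inv (rmat A) *v rvec x = rvec y \<longleftrightarrow> x = A *v y"
proof
  assume "matrix_inv (rmat A) *v rvec x = rvec y"
  then have "rmat A *v rvec y = rvec x"
    using matrix_inv_rmat(2)[OF assms] by (metis matrix_vector_mul_assoc matrix_vector_mul_lid)
  then show "x = A *v y" by (simp add: rmat_mult_rvec)
qed (simp add: rmat_mult_rvec[symmetric] matrix_inv_rmat_cancel[OF assms])

lemma matrix_vector_mult_smult: "A *v (c *s x) = (c::'a::comm_ring_1) *s (A *v x)"
  by (simp add: vec_eq_iff matrix_vector_mult_def sum_distrib_left mult.left_commute)

lemma smult_vector_matrix_mult: "(c *s x) v* A = (c::'a::comm_ring_1) *s (x v* A)"
  by (simp add: vec_eq_iff vector_matrix_mult_def sum_distrib_left mult.assoc)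

lemma mat_mult_vec: "mat (c::'a::comm_ring_1) *v x = c *s x"
  by (simp add: vec_eq_iff matrix_vector_mult_def mat_def if_distrib if_distribR cong: if_cong)

definition int_adjugate :: "int^'n^'n \<Rightarrow> int^'n^'n" where
  "int_adjugate A = (\<chi> k i. det (\<chi> r s. if s = k then (if r = i then 1 else 0) else A$r$s))"

lemma of_int_int_adjugate:
  fixes A :: "int^'n^'n"
  assumes "det A \<noteq> 0"
  shows "real_of_int (int_adjugate A $ k $ i) = matrix_inv (rmat A) $ k $ i * det (rmat A)"
proof -
  let ?R = "rmat A" and ?Ri = "matrix_inv (rmat A)"
  let ?e = "axis i (1::real)"
  have e: "?R *v (?Ri *v ?e) = ?e"
    using matrix_inv_rmat(2)[OF assms] by (simp add: matrix_vector_mul_assoc)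
  have "real_of_int (int_adjugate A $ k $ i)
      = det (rmat (\<chi> r s. if s = k then (if r = i then 1 else 0) else A$r$s))"
    by (simp add: int_adjugate_def det_rmat)
  also have "rmat (\<chi> r s. if s = k then (if r = i then 1 else 0) else A$r$s)
      = (\<chi> r s. if s = k then (?R *v (?Ri *v ?e))$r else ?R$r$s)"
    unfolding e by (simp add: vec_eq_iff axis_def)
  also have "det \<dots> = (?Ri *v ?e) $ k * det ?R"
    by (rule cramer_lemma)
  also have "(?Ri *v ?e) $ k = ?Ri $ k $ i"
    by (simp add: matrix_vector_mult_def axis_def if_distrib if_distribR cong: if_cong)
  finally show ?thesis .
qed

lemma matrix_mult_int_adjugate:
  fixes A :: "int^'n^'n"
  assumes "det A \<noteq> 0"
  shows "A ** int_adjugate A = mat (det A)"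
proof -
  have "rmat (A ** int_adjugate A) $ a $ b = rmat (mat (det A)) $ a $ b" for a b
  proof -
    have "rmat (A ** int_adjugate A) $ a $ b
        = (\<Sum>k\<in>UNIV. rmat A $ a $ k * rmat (int_adjugate A) $ k $ b)"
      by (simp add: rmat_mult matrix_matrix_mult_def)
    also have "\<dots> = (\<Sum>k\<in>UNIV. rmat A $ a $ k * matrix_inv (rmat A) $ k $ b) * det (rmat A)"
      by (simp add: of_int_int_adjugate[OF assms] sum_distrib_right mult.assoc)
    also have "\<dots> = (rmat A ** matrix_inv (rmat A)) $ a $ b * det (rmat A)"
      by (simp add: matrix_matrix_mult_def)
    also have "\<dots> = rmat (mat (det A)) $ a $ b"
      using matrix_inv_rmat(2)[OF assms] by (simp add: mat_def det_rmat)
    finally show ?thesis .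
  qed
  then show ?thesis by (simp add: vec_eq_iff)
qed

lemma int_adjugate_solves:
  fixes A :: "int^'n^'n"
  assumes "det A \<noteq> 0"
  shows "A *v (int_adjugate A *v b) = det A *s b"
  by (simp add: matrix_vector_mul_assoc matrix_mult_int_adjugate[OF assms] mat_mult_vec)

lemma unimodular_solvable:
  fixes U :: "int^'n^'n"
  assumes "unimodular U"
  shows "\<exists>y. U *v y = b"
proof -
  have d: "det U \<noteq> 0" using assms by (auto simp: unimodular_def)
  have "U *v (det U *s (int_adjugate U *v b)) = (det U * det U) *s b"
    by (simp add: int_adjugate_solves[OF d] matrix_vector_mult_smult vector_smult_assoc)
  also have "det U * det U = 1" using assms by (auto simp: unimodular_def)
  finally show ?thesis by auto
qed

section \<open>Integer matrices modulo p\<close>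

definition vec_cong :: "int \<Rightarrow> int^'n \<Rightarrow> int^'n \<Rightarrow> bool" where
  "vec_cong p x y \<longleftrightarrow> (\<forall>i. [x$i = y$i] (mod p))"

definition mat_cong :: "int \<Rightarrow> int^'n^'m \<Rightarrow> int^'n^'m \<Rightarrow> bool" where
  "mat_cong p X Y \<longleftrightarrow> (\<forall>i j. [X$i$j = Y$i$j] (mod p))"

lemma vec_cong_refl [simp]: "vec_cong p x x"
  by (simp add: vec_cong_def)

lemma vec_cong_sym: "vec_cong p x y \<Longrightarrow> vec_cong p y x"
  by (simp add: vec_cong_def cong_sym)

lemma vec_cong_trans: "vec_cong p x y \<Longrightarrow> vec_cong p y z \<Longrightarrow> vec_cong p x z"
  unfolding vec_cong_def by (blast intro: cong_trans)

lemma vec_cong_0_iff: "vec_cong p x 0 \<longleftrightarrow> (\<forall>i. p dvd x$i)"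
  by (simp add: vec_cong_def cong_0_iff)

lemma vec_cong_diff: "vec_cong p x x' \<Longrightarrow> vec_cong p y y' \<Longrightarrow> vec_cong p (x - y) (x' - y')"
  unfolding vec_cong_def by (simp add: cong_diff)

lemma mat_cong_refl [simp]: "mat_cong p X X"
  by (simp add: mat_cong_def)

lemma mat_cong_sym: "mat_cong p X Y \<Longrightarrow> mat_cong p Y X"
  by (simp add: mat_cong_def cong_sym)

lemma mat_cong_trans: "mat_cong p X Y \<Longrightarrow> mat_cong p Y Z \<Longrightarrow> mat_cong p X Z"
  unfolding mat_cong_def by (blast intro: cong_trans)

lemma mat_cong_diff: "mat_cong p X X' \<Longrightarrow> mat_cong p Y Y' \<Longrightarrow> mat_cong p (X - Y) (X' - Y')"
  unfolding mat_cong_def by (simp add: cong_diff)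

lemma mat_cong_mult: "mat_cong p X X' \<Longrightarrow> mat_cong p Y Y' \<Longrightarrow> mat_cong p (X ** Y) (X' ** Y')"
  unfolding mat_cong_def matrix_matrix_mult_def by (auto intro!: cong_sum cong_mult)

lemma vec_cong_matrix_vector_mult:
  "mat_cong p X X' \<Longrightarrow> vec_cong p x x' \<Longrightarrow> vec_cong p (X *v x) (X' *v x')"
  unfolding mat_cong_def vec_cong_def matrix_vector_mult_def by (auto intro!: cong_sum cong_mult)

lemma vec_cong_vector_matrix_mult:
  "vec_cong p x x' \<Longrightarrow> mat_cong p X X' \<Longrightarrow> vec_cong p (x v* X) (x' v* X')"
  unfolding mat_cong_def vec_cong_def vector_matrix_mult_def by (auto intro!: cong_sum cong_mult)

lemma vec_cong_0_matrix_vector_mult: "vec_cong p x 0 \<Longrightarrow> vec_cong p (X *v x) 0"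
  using vec_cong_matrix_vector_mult[OF mat_cong_refl, of p x 0 X] by simp

lemma vec_cong_0_vector_matrix_mult: "vec_cong p x 0 \<Longrightarrow> vec_cong p (x v* X) 0"
  using vec_cong_vector_matrix_mult[OF _ mat_cong_refl, of p x 0 X] by simp

lemma vec_cong_row: "mat_cong p X Y \<Longrightarrow> vec_cong p (X $ r) (Y $ r)"
  by (simp add: mat_cong_def vec_cong_def)

lemma row_matrix_mult: "(F ** X) $ r = F $ r v* X"
  by (simp add: matrix_matrix_mult_def vector_matrix_mult_def vec_eq_iff mult.commute)

lemma matrix_mult_diff_left: "(X::'a::comm_ring_1^'n^'n) ** (Y - Z) = X ** Y - X ** Z"
  by (simp add: matrix_matrix_mult_def vec_eq_iff sum_subtractf algebra_simps)

lemma matrix_mult_diff_right: "((Y::'a::comm_ring_1^'n^'n) - Z) ** X = Y ** X - Z ** X"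
  by (simp add: matrix_matrix_mult_def vec_eq_iff sum_subtractf algebra_simps)

primrec mat_pow :: "'a::semiring_1^'n^'n \<Rightarrow> nat \<Rightarrow> 'a^'n^'n" where
  "mat_pow A 0 = mat 1"
| "mat_pow A (Suc n) = A ** mat_pow A n"

lemma mat_pow_add: "mat_pow A (m + n) = mat_pow A m ** mat_pow A n"
  by (induct m) (simp_all add: matrix_mul_assoc)

lemma mat_pow_Suc_right: "mat_pow A (Suc n) = mat_pow A n ** A"
  using mat_pow_add[of A n 1] by simp

lemma mat_pow_commute:
  assumes "A ** B = B ** A"
  shows "mat_pow A n ** B = B ** mat_pow A n"
proof (induct n)
  case (Suc n)
  have "mat_pow A (Suc n) ** B = A ** (mat_pow A n ** B)" by (simp add: matrix_mul_assoc)
  also have "\<dots> = A ** B ** mat_pow A n" using Suc by (simp add: matrix_mul_assoc)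
  also have "\<dots> = B ** mat_pow A (Suc n)" using assms by (simp add: matrix_mul_assoc)
  finally show ?case .
qed simp

lemma mat_pow_commute_mat_pow:
  assumes "A ** B = B ** A"
  shows "mat_pow A m ** mat_pow B n = mat_pow B n ** mat_pow A m"
  by (metis assms mat_pow_commute)

text \<open>The powers of A modulo p run through finitely many residue matrices, so they are eventually
  periodic; a multiple of the period beyond the preperiod gives an idempotent power.\<close>

lemma mat_pow_idempotent_mod:
  fixes A :: "int^'n^'n"
  assumes p: "p > 0"
  shows "\<exists>k\<ge>1. mat_cong p (mat_pow A k ** mat_pow A k) (mat_pow A k)"
proof -
  define f where "f n = (\<lambda>i j. mat_pow A n $ i $ j mod p)" for n
  have "range f \<subseteq> Pi\<^sub>E UNIV (\<lambda>_. Pi\<^sub>E UNIV (\<lambda>_. {0..<p}))"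
    using p by (auto simp: f_def)
  then have "finite (range f)"
    by (rule finite_subset) (intro finite_PiE; simp)
  then have "\<not> inj f" using infinite_UNIV_nat finite_imageD by blast
  then obtain a b where ab: "a < b" "f a = f b"
    unfolding inj_def by (metis linorder_neqE_nat)
  have mab: "mat_cong p (mat_pow A a) (mat_pow A b)"
    using ab(2) unfolding f_def mat_cong_def cong_def by metis
  define d where "d = b - a"
  have d: "d \<ge> 1" using ab d_def by auto
  have period: "mat_cong p (mat_pow A (x + d)) (mat_pow A x)" if "x \<ge> a" for x
  proof -
    have "mat_pow A (x + d) = mat_pow A (x - a) ** mat_pow A b"
      using that ab by (simp add: mat_pow_add[symmetric] d_def)
    moreover have "mat_pow A x = mat_pow A (x - a) ** mat_pow A a"
      using that by (simp add: mat_pow_add[symmetric])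
    ultimately show ?thesis using mat_cong_mult[OF mat_cong_refl mat_cong_sym[OF mab]] by simp
  qed
  have periods: "mat_cong p (mat_pow A (x + m * d)) (mat_pow A x)" if "x \<ge> a" for x m
  proof (induct m)
    case (Suc m)
    have "mat_cong p (mat_pow A ((x + m * d) + d)) (mat_pow A (x + m * d))"
      using period that by simp
    moreover have "x + Suc m * d = (x + m * d) + d" by simp
    ultimately show ?case using Suc by (metis mat_cong_trans)
  qed simp
  define k where "k = (a + 1) * d"
  have "(a + 1) * 1 \<le> k" unfolding k_def using d by (rule mult_le_mono2)
  then have "k \<ge> a" "k \<ge> 1" by simp_all
  then show ?thesis
    using periods[of k "a + 1"] by (auto simp: k_def mat_pow_add[symmetric])
qed

lemma idempotent_mod_complement:
  fixes E :: "int^'n^'n"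
  assumes "mat_cong p (E ** E) E"
  shows "mat_cong p ((mat 1 - E) ** E) 0"
proof -
  have "mat_cong p (E - E ** E) (E - E)" by (rule mat_cong_diff[OF mat_cong_refl assms])
  then show ?thesis by (simp add: matrix_mult_diff_right)
qed

lemma mat_pow_left_null_step:
  fixes X :: "int^'n^'n"
  assumes "\<not> vec_cong p c 0" "vec_cong p (c v* mat_pow X k) 0"
  shows "\<exists>i. \<not> vec_cong p (c v* mat_pow X i) 0 \<and> vec_cong p ((c v* mat_pow X i) v* X) 0"
  using assms
proof (induct k arbitrary: c)
  case (Suc k)
  show ?case
  proof (cases "vec_cong p (c v* X) 0")
    case True
    then show ?thesis using Suc(2) by (intro exI[of _ 0]) simp
  next
    case False
    have "vec_cong p ((c v* X) v* mat_pow X k) 0"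
      using Suc(3) by (simp add: vector_matrix_mul_assoc)
    from Suc(1)[OF False this] obtain i where
      "\<not> vec_cong p ((c v* X) v* mat_pow X i) 0 \<and> vec_cong p (((c v* X) v* mat_pow X i) v* X) 0"
      by blast
    then show ?thesis by (intro exI[of _ "Suc i"]) (simp add: vector_matrix_mul_assoc)
  qed
qed simp

text \<open>With E and E' idempotent modulo p, every row of (1 - E)(1 - E') is killed by E and E' on
  the right, and these rows are not all zero because the product fixes u modulo p.\<close>

lemma common_left_null_of_idempotents:
  fixes E E' :: "int^'n^'n"
  assumes EE: "mat_cong p (E ** E) E" and EE': "mat_cong p (E' ** E') E'"
    and comm: "E ** E' = E' ** E"
    and u: "\<not> vec_cong p u 0" and Eu: "vec_cong p (E *v u) 0" and E'u: "vec_cong p (E' *v u) 0"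
  shows "\<exists>c. \<not> vec_cong p c 0 \<and> vec_cong p (c v* E) 0 \<and> vec_cong p (c v* E') 0"
proof -
  define F where "F = (mat 1 - E) ** (mat 1 - E')"
  have "vec_cong p ((mat 1 - E') *v u) u"
    using vec_cong_diff[OF vec_cong_refl E'u, of u] by (simp add: matrix_vector_mult_diff_rdistrib)
  then have "vec_cong p ((mat 1 - E) *v ((mat 1 - E') *v u)) ((mat 1 - E) *v u)"
    by (rule vec_cong_matrix_vector_mult[OF mat_cong_refl])
  moreover have "vec_cong p ((mat 1 - E) *v u) u"
    using vec_cong_diff[OF vec_cong_refl Eu, of u] by (simp add: matrix_vector_mult_diff_rdistrib)
  ultimately have Fu: "vec_cong p (F *v u) u"
    unfolding F_def by (metis vec_cong_trans matrix_vector_mul_assoc)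
  have "\<not> mat_cong p F 0"
  proof
    assume "mat_cong p F 0"
    then have "vec_cong p (F *v u) 0" using vec_cong_matrix_vector_mult[OF _ vec_cong_refl] by force
    then show False using Fu u vec_cong_trans vec_cong_sym by blast
  qed
  then obtain r where r: "\<not> vec_cong p (F $ r) 0" unfolding mat_cong_def vec_cong_def by auto
  have "F ** E = ((mat 1 - E) ** E) ** (mat 1 - E')"
    unfolding F_def using comm
    by (simp add: matrix_mul_assoc[symmetric] matrix_mult_diff_left matrix_mult_diff_right)
      (metis matrix_mul_assoc)
  then have "mat_cong p (F ** E) 0"
    using mat_cong_mult[OF idempotent_mod_complement[OF EE] mat_cong_refl, of "mat 1 - E'"] by simp
  moreover have "mat_cong p (F ** E') 0"
    using mat_cong_mult[OF mat_cong_refl idempotent_mod_complement[OF EE'], of "mat 1 - E"]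
    by (simp add: F_def matrix_mul_assoc)
  ultimately show ?thesis using r vec_cong_row[of p "F ** _" 0 r] by (auto simp: row_matrix_mult)
qed

lemma common_left_null_of_common_right_null:
  fixes A B :: "int^'n^'n"
  assumes p: "p > 0" and comm: "A ** B = B ** A"
    and u: "\<not> vec_cong p u 0" and Au: "vec_cong p (A *v u) 0" and Bu: "vec_cong p (B *v u) 0"
  shows "\<exists>c. \<not> vec_cong p c 0 \<and> vec_cong p (c v* A) 0 \<and> vec_cong p (c v* B) 0"
proof -
  obtain k where k: "k \<ge> 1" "mat_cong p (mat_pow A k ** mat_pow A k) (mat_pow A k)"
    using mat_pow_idempotent_mod[OF p] by blast
  obtain l where l: "l \<ge> 1" "mat_cong p (mat_pow B l ** mat_pow B l) (mat_pow B l)"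
    using mat_pow_idempotent_mod[OF p] by blast
  have "vec_cong p (mat_pow A k *v u) 0"
    using vec_cong_0_matrix_vector_mult[OF Au, of "mat_pow A (k - 1)"] k(1)
      mat_pow_Suc_right[of A "k - 1"] by (simp add: matrix_vector_mul_assoc)
  moreover have "vec_cong p (mat_pow B l *v u) 0"
    using vec_cong_0_matrix_vector_mult[OF Bu, of "mat_pow B (l - 1)"] l(1)
      mat_pow_Suc_right[of B "l - 1"] by (simp add: matrix_vector_mul_assoc)
  ultimately obtain c0 where c0: "\<not> vec_cong p c0 0"
      "vec_cong p (c0 v* mat_pow A k) 0" "vec_cong p (c0 v* mat_pow B l) 0"
    using common_left_null_of_idempotents[OF k(2) l(2) mat_pow_commute_mat_pow[OF comm] u] by blast
  obtain i where i: "\<not> vec_cong p (c0 v* mat_pow A i) 0" "vec_cong p ((c0 v* mat_pow A i) v* A) 0"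
    using mat_pow_left_null_step[OF c0(1,2)] by blast
  define c1 where "c1 = c0 v* mat_pow A i"
  have "c1 v* mat_pow B l = (c0 v* mat_pow B l) v* mat_pow A i"
    using mat_pow_commute_mat_pow[OF comm, of i l] by (simp add: c1_def vector_matrix_mul_assoc)
  then have "vec_cong p (c1 v* mat_pow B l) 0"
    using vec_cong_0_vector_matrix_mult[OF c0(3)] by simp
  then obtain j where j: "\<not> vec_cong p (c1 v* mat_pow B j) 0"
      "vec_cong p ((c1 v* mat_pow B j) v* B) 0"
    using mat_pow_left_null_step[OF i(1)[folded c1_def]] by blast
  have "(c1 v* mat_pow B j) v* A = (c1 v* A) v* mat_pow B j"
    using mat_pow_commute[OF comm[symmetric], of j] by (simp add: vector_matrix_mul_assoc)
  then have "vec_cong p ((c1 v* mat_pow B j) v* A) 0"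
    using vec_cong_0_vector_matrix_mult[OF i(2)[folded c1_def]] by simp
  then show ?thesis using j by blast
qed

section \<open>Coprime matrices and intersections of lattices\<close>

lemma sum_UNIV_remove: "(\<Sum>l\<in>UNIV. f l) = f k + (\<Sum>l\<in>UNIV-{k}. f l)"
  for f :: "'n::finite \<Rightarrow> int"
  by (simp add: sum.remove)

text \<open>If the row vector c (with c$k = 1) annihilates A modulo p, then A = D X with D the identity
  matrix whose k-th row is replaced by (-c$1, ..., p, ..., -c$n); D has determinant p.\<close>

definition divisor_mat :: "int \<Rightarrow> int^'n \<Rightarrow> 'n \<Rightarrow> int^'n^'n" where
  "divisor_mat p c k =
     (\<chi> i j. if i = k then (if j = k then p else - c$j) else (if i = j then 1 else 0))"

definition quotient_mat :: "int \<Rightarrow> int^'n \<Rightarrow> 'n \<Rightarrow> int^'n^'n \<Rightarrow> int^'n^'n" where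
  "quotient_mat p c k A = (\<chi> i j. if i = k then (c v* A)$j div p else A$i$j)"

lemma divisor_mat_mult_quotient_mat:
  fixes A :: "int^'n^'n"
  assumes ck: "c$k = 1" and cA: "vec_cong p (c v* A) 0"
  shows "divisor_mat p c k ** quotient_mat p c k A = A"
proof -
  have "(divisor_mat p c k ** quotient_mat p c k A) $ i $ j = A $ i $ j" for i j
  proof (cases "i = k")
    case True
    have "(divisor_mat p c k ** quotient_mat p c k A) $ i $ j
        = p * ((c v* A)$j div p) + (\<Sum>l\<in>UNIV-{k}. - c$l * A$l$j)"
      unfolding matrix_matrix_mult_def using True
      by (simp add: sum_UNIV_remove[of _ k] divisor_mat_def quotient_mat_def)
    also have "p * ((c v* A)$j div p) = (c v* A)$j"
      using cA by (simp add: vec_cong_0_iff)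
    also have "(c v* A)$j = A$k$j + (\<Sum>l\<in>UNIV-{k}. c$l * A$l$j)"
      by (simp add: vector_matrix_mult_def sum_UNIV_remove[of _ k] ck)
    finally show ?thesis using True by (simp add: sum_negf)
  next
    case False
    have "(divisor_mat p c k ** quotient_mat p c k A) $ i $ j
        = (\<Sum>l\<in>UNIV. (if i = l then 1 else 0) * quotient_mat p c k A $ l $ j)"
      unfolding matrix_matrix_mult_def using False by (simp add: divisor_mat_def)
    also have "\<dots> = quotient_mat p c k A $ i $ j"
      by (simp add: if_distrib if_distribR cong: if_cong)
    finally show ?thesis using False by (simp add: quotient_mat_def)
  qed
  then show ?thesis by (simp add: vec_eq_iff)
qed

lemma divisor_mat_not_unimodular:
  assumes p: "p > 1"
  shows "\<not> unimodular (divisor_mat p c k)"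
proof
  assume "unimodular (divisor_mat p c k)"
  then obtain y where y: "divisor_mat p c k *v y = axis k 1" using unimodular_solvable by blast
  have yi: "y$i = 0" if "i \<noteq> k" for i
  proof -
    have "(divisor_mat p c k *v y)$i = (\<Sum>l\<in>UNIV. (if i = l then 1 else 0) * y$l)"
      unfolding matrix_vector_mult_def using that by (simp add: divisor_mat_def)
    also have "\<dots> = y$i" by (simp add: if_distrib if_distribR cong: if_cong)
    finally show ?thesis using y that by (simp add: axis_def)
  qed
  have "(divisor_mat p c k *v y)$k = p * y$k + (\<Sum>l\<in>UNIV-{k}. - c$l * y$l)"
    unfolding matrix_vector_mult_def by (simp add: sum_UNIV_remove[of _ k] divisor_mat_def)
  also have "(\<Sum>l\<in>UNIV-{k}. - c$l * y$l) = 0" by (rule sum.neutral) (simp add: yi)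
  finally have "p * y$k = 1" using y by (simp add: axis_def)
  then have "p dvd 1" by (metis dvd_triv_left)
  then show False using p by simp
qed

lemma not_coprime_mat_of_common_left_null:
  fixes A B :: "int^'n^'n"
  assumes p: "prime p" and c: "\<not> vec_cong (int p) c 0"
    and cA: "vec_cong (int p) (c v* A) 0" and cB: "vec_cong (int p) (c v* B) 0"
  shows "\<not> coprime_mat A B"
proof -
  obtain k where k: "\<not> int p dvd c$k" using c by (auto simp: vec_cong_0_iff)
  then have "coprime (c$k) (int p)"
    using p by (simp add: prime_imp_coprime coprime_commute)
  then obtain s where s: "[c$k * s = 1] (mod int p)" using cong_solve_coprime_int by blast
  define c' where "c' = (\<chi> j. if j = k then 1 else s * c$j)"
  have cc: "vec_cong (int p) c' (s *s c)"
    using cong_sym[OF s] by (auto simp: vec_cong_def c'_def mult.commute)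
  have c'X: "vec_cong (int p) (c' v* X) 0" if "vec_cong (int p) (c v* X) 0" for X :: "int^'n^'n"
  proof -
    have "vec_cong (int p) (c' v* X) (s *s (c v* X))"
      using vec_cong_vector_matrix_mult[OF cc mat_cong_refl] by (simp add: smult_vector_matrix_mult)
    moreover have "vec_cong (int p) (s *s (c v* X)) 0"
      using that by (simp add: vec_cong_0_iff)
    ultimately show ?thesis by (rule vec_cong_trans)
  qed
  have "c'$k = 1" by (simp add: c'_def)
  moreover have "int p > 1" using p prime_gt_1_nat by auto
  ultimately show ?thesis
    unfolding coprime_mat_def
    using divisor_mat_mult_quotient_mat c'X[OF cA] c'X[OF cB] divisor_mat_not_unimodular by metis
qed

definition coprime_mod_primes :: "int^'n^'n \<Rightarrow> int^'n^'n \<Rightarrow> bool" where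
  "coprime_mod_primes A B \<longleftrightarrow>
     (\<forall>(p::nat) c. prime p \<longrightarrow> \<not> vec_cong (int p) c 0 \<longrightarrow> vec_cong (int p) (c v* A) 0
        \<longrightarrow> \<not> vec_cong (int p) (c v* B) 0)"

lemma coprime_mat_imp_coprime_mod_primes: "coprime_mat A B \<Longrightarrow> coprime_mod_primes A B"
  unfolding coprime_mod_primes_def using not_coprime_mat_of_common_left_null by blast

lemma coprime_mod_primes_mat_1: "coprime_mod_primes C (mat 1)"
  unfolding coprime_mod_primes_def by simp

lemma coprime_mod_primes_mult:
  assumes "coprime_mod_primes C A" "coprime_mod_primes C B" "C ** A = A ** C"
  shows "coprime_mod_primes C (A ** B)"
  unfolding coprime_mod_primes_def
proof (intro allI impI notI)
  fix p :: nat and c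
  assume p: "prime p" and c: "\<not> vec_cong (int p) c 0" and cC: "vec_cong (int p) (c v* C) 0"
    and cAB: "vec_cong (int p) (c v* (A ** B)) 0"
  have cA: "\<not> vec_cong (int p) (c v* A) 0"
    using assms(1) p c cC unfolding coprime_mod_primes_def by blast
  moreover have "vec_cong (int p) ((c v* A) v* B) 0"
    using cAB by (simp add: vector_matrix_mul_assoc)
  moreover have "vec_cong (int p) ((c v* A) v* C) 0"
    using vec_cong_0_vector_matrix_mult[OF cC, of A] assms(3) by (simp add: vector_matrix_mul_assoc)
  ultimately show False using assms(2) p unfolding coprime_mod_primes_def by blast
qed

lemma LAT_mult_vec [simp]: "A *v n \<in> LAT A"
  by (auto simp: LAT_def)

text \<open>Dividing p q a \<in> LAT B by the prime p: a vector w with B w = p q a that is not divisible by p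
  would be a common right null vector of A and B modulo p.\<close>

lemma LAT_prime_descent:
  fixes A B :: "int^'n^'n"
  assumes dB: "det B \<noteq> 0" and comm: "A ** B = B ** A" and cop: "coprime_mod_primes A B"
    and ab: "A *v a = B *v b" and p: "prime p" and pq: "int (p * q) *s a \<in> LAT B"
  shows "int q *s a \<in> LAT B"
proof (rule ccontr)
  assume nq: "int q *s a \<notin> LAT B"
  obtain w where w: "B *v w = int (p * q) *s a" using pq by (auto simp: LAT_def)
  have p0: "int p \<noteq> 0" using p by simp
  have w_nonnull: "\<not> vec_cong (int p) w 0"
  proof
    assume "vec_cong (int p) w 0"
    then have "w = int p *s (\<chi> i. w$i div int p)"
      by (simp add: vec_cong_0_iff vec_eq_iff)
    then have "int p *s (B *v (\<chi> i. w$i div int p)) = int p *s (int q *s a)"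
      using w by (metis matrix_vector_mult_smult vector_smult_assoc of_nat_mult)
    then have "B *v (\<chi> i. w$i div int p) = int q *s a"
      using p0 by (simp add: vec_eq_iff)
    then show False using nq by (metis LAT_mult_vec)
  qed
  have "B *v (A *v w) = A *v (B *v w)"
    by (simp add: matrix_vector_mul_assoc comm)
  also have "\<dots> = B *v (int (p * q) *s b)"
    by (simp add: w matrix_vector_mult_smult ab)
  finally have "B *v (A *v w) = B *v (int (p * q) *s b)" .
  then have "A *v w = int (p * q) *s b" by (rule matrix_vector_mult_cancel_int[OF dB])
  then have "vec_cong (int p) (A *v w) 0" and "vec_cong (int p) (B *v w) 0"
    using w by (simp_all add: vec_cong_0_iff)
  then obtain c where "\<not> vec_cong (int p) c 0" "vec_cong (int p) (c v* A) 0"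
      "vec_cong (int p) (c v* B) 0"
    using common_left_null_of_common_right_null[OF _ comm w_nonnull] p prime_gt_0_nat by auto
  then show False using cop p unfolding coprime_mod_primes_def by blast
qed

lemma LAT_of_scaled_mem:
  fixes A B :: "int^'n^'n"
  assumes dB: "det B \<noteq> 0" and comm: "A ** B = B ** A" and cop: "coprime_mod_primes A B"
    and ab: "A *v a = B *v b" and "q > 0" and "int q *s a \<in> LAT B"
  shows "a \<in> LAT B"
  using assms(5,6)
proof (induction q rule: less_induct)
  case (less q)
  show ?case
  proof (cases "q = 1")
    case True
    then show ?thesis using less.prems by simp
  next
    case False
    then obtain p where p: "prime p" and "p dvd q" using prime_factor_nat by blast
    then obtain q' where q: "q = p * q'" by blast
    then have "q' > 0" "q' < q" using less.prems(1) prime_gt_1_nat[OF p] by auto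
    moreover have "int q' *s a \<in> LAT B"
      using LAT_prime_descent[OF dB comm cop ab p] less.prems q by blast
    ultimately show ?thesis using less.IH by blast
  qed
qed

lemma LAT_Int_subset_LAT_mult:
  fixes A B :: "int^'n^'n"
  assumes dB: "det B \<noteq> 0" and comm: "A ** B = B ** A" and cop: "coprime_mod_primes A B"
    and xA: "x \<in> LAT A" and xB: "x \<in> LAT B"
  shows "x \<in> LAT (A ** B)"
proof -
  obtain a where a: "x = A *v a" using xA by (auto simp: LAT_def)
  obtain b where b: "x = B *v b" using xB by (auto simp: LAT_def)
  have "B *v (sgn (det B) *s (int_adjugate B *v a)) = (sgn (det B) * det B) *s a"
    by (simp add: matrix_vector_mult_smult int_adjugate_solves[OF dB] vector_smult_assoc)
  also have "sgn (det B) * det B = int (nat \<bar>det B\<bar>)"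
    using abs_sgn[of "det B"] by (simp add: mult.commute)
  finally have "int (nat \<bar>det B\<bar>) *s a \<in> LAT B" by (metis LAT_mult_vec)
  then have "a \<in> LAT B"
    using LAT_of_scaled_mem[OF dB comm cop, of a b "nat \<bar>det B\<bar>"] a b dB by simp
  then show ?thesis
    using a by (auto simp: LAT_def matrix_vector_mul_assoc)
qed

section \<open>Products of pairwise coprime matrices\<close>

lemma mprod_Cons: "a \<le> b \<Longrightarrow> mprod G a b = G a ** mprod G (Suc a) b"
  by (simp only: mprod_def upt_conv_Cons[of a "Suc b"] less_Suc_eq_le foldr_Cons o_apply)

lemma mprod_empty: "b < a \<Longrightarrow> mprod G a b = mat 1"
  by (simp add: mprod_def)

lemma mprod_induct [case_names empty Cons]:
  assumes empty: "\<And>a. b < a \<Longrightarrow> P a"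
    and Cons: "\<And>a. a \<le> b \<Longrightarrow> P (Suc a) \<Longrightarrow> P a"
  shows "P a"
proof (induct "Suc b - a" arbitrary: a)
  case 0
  then show ?case using empty by simp
next
  case (Suc n)
  then have "a \<le> b" and "P (Suc a)" by simp_all
  then show ?case by (rule Cons)
qed

lemma det_mprod_nonzero:
  fixes G :: "nat \<Rightarrow> int^'n^'n"
  shows "\<forall>i\<in>{a..b}. det (G i) \<noteq> 0 \<Longrightarrow> det (mprod G a b) \<noteq> 0"
proof (induct a rule: mprod_induct[of b])
  case (empty a)
  then show ?case by (simp add: mprod_empty)
next
  case (Cons a)
  then show ?case by (simp add: mprod_Cons det_mul)
qed

lemma mprod_commute:
  fixes G :: "nat \<Rightarrow> int^'n^'n"
  shows "\<forall>i\<in>{a..b}. C ** G i = G i ** C \<Longrightarrow> C ** mprod G a b = mprod G a b ** C"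
proof (induct a rule: mprod_induct[of b])
  case (empty a)
  then show ?case by (simp add: mprod_empty)
next
  case (Cons a)
  then have "C ** G a = G a ** C" and "C ** mprod G (Suc a) b = mprod G (Suc a) b ** C"
    by auto
  then show ?case
    using Cons(1) by (simp add: mprod_Cons matrix_mul_assoc) (simp add: matrix_mul_assoc[symmetric])
qed

lemma coprime_mod_primes_mprod:
  fixes G :: "nat \<Rightarrow> int^'n^'n"
  shows "\<forall>i\<in>{a..b}. coprime_mod_primes C (G i) \<and> C ** G i = G i ** C
    \<Longrightarrow> coprime_mod_primes C (mprod G a b)"
proof (induct a rule: mprod_induct[of b])
  case (empty a)
  then show ?case by (simp add: mprod_empty coprime_mod_primes_mat_1)
next
  case (Cons a)
  then show ?case by (simp add: mprod_Cons coprime_mod_primes_mult)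
qed

lemma LAT_mprod_of_mem_all:
  fixes G :: "nat \<Rightarrow> int^'n^'n"
  assumes "\<forall>i\<in>{a..b}. det (G i) \<noteq> 0"
    and "\<forall>i\<in>{a..b}. \<forall>j\<in>{a..b}. i \<noteq> j \<longrightarrow> G i ** G j = G j ** G i \<and> coprime_mod_primes (G i) (G j)"
    and "\<forall>i\<in>{a..b}. x \<in> LAT (G i)"
  shows "x \<in> LAT (mprod G a b)"
  using assms
proof (induct a rule: mprod_induct[of b])
  case (empty a)
  then show ?case using LAT_mult_vec[of "mat 1" x] by (simp add: mprod_empty)
next
  case (Cons a)
  let ?P = "mprod G (Suc a) b"
  have "det ?P \<noteq> 0" using Cons by (intro det_mprod_nonzero) auto
  moreover have "G a ** ?P = ?P ** G a" using Cons by (intro mprod_commute) auto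
  moreover have "coprime_mod_primes (G a) ?P" using Cons by (intro coprime_mod_primes_mprod) auto
  moreover have "x \<in> LAT (G a)" "x \<in> LAT ?P" using Cons by auto
  ultimately have "x \<in> LAT (G a ** ?P)" by (rule LAT_Int_subset_LAT_mult)
  then show ?case using Cons(1) by (simp add: mprod_Cons)
qed

section \<open>Remainders modulo a lattice\<close>

lemma LAT_diff: "x \<in> LAT A \<Longrightarrow> y \<in> LAT A \<Longrightarrow> x - y \<in> LAT A"
  by (auto simp: LAT_def matrix_vector_mult_diff_distrib[symmetric])

lemma LAT_add: "x \<in> LAT A \<Longrightarrow> y \<in> LAT A \<Longrightarrow> x + y \<in> LAT A"
  by (auto simp: LAT_def matrix_vector_right_distrib[symmetric])

lemma NN_eq_if_diff_mem_LAT: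
  fixes A :: "int^'n^'n"
  assumes d: "det A \<noteq> 0" and r: "r \<in> NN A" and r': "r' \<in> NN A" and l: "r - r' \<in> LAT A"
  shows "r = r'"
proof -
  obtain f where f: "\<forall>j. 0 \<le> f$j \<and> f$j < 1" "rvec r = rmat A *v f"
    using r by (auto simp: NN_def)
  obtain f' where f': "\<forall>j. 0 \<le> f'$j \<and> f'$j < 1" "rvec r' = rmat A *v f'"
    using r' by (auto simp: NN_def)
  obtain k where k: "r - r' = A *v k" using l by (auto simp: LAT_def)
  have "rmat A *v (f - f') = rmat A *v rvec k"
    by (simp add: matrix_vector_mult_diff_distrib f(2)[symmetric] f'(2)[symmetric] rmat_mult_rvec
        rvec_diff[symmetric] k)
  then have "f - f' = rvec k" by (metis matrix_inv_rmat_cancel[OF d])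
  have "k$j = 0" for j
  proof -
    have "real_of_int (k$j) = f$j - f'$j" using \<open>f - f' = rvec k\<close> by (simp add: vec_eq_iff)
    then have "real_of_int (k$j) > -1" "real_of_int (k$j) < 1" using f(1) f'(1) by (smt (verit))+
    then show ?thesis by linarith
  qed
  then have "k = 0" by (simp add: vec_eq_iff)
  then show ?thesis using k by simp
qed

lemma exists_NN_representative:
  fixes A :: "int^'n^'n"
  assumes d: "det A \<noteq> 0"
  shows "\<exists>r. r \<in> NN A \<and> m - r \<in> LAT A"
proof -
  define x where "x = matrix_inv (rmat A) *v rvec m"
  define k where "k = (\<chi> j. \<lfloor>x$j\<rfloor>)"
  have "rmat A *v x = rvec m"
    using matrix_inv_rmat(2)[OF d] by (simp add: x_def matrix_vector_mul_assoc)
  then have "rvec (m - A *v k) = rmat A *v (x - rvec k)"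
    by (simp add: rvec_diff rmat_mult_rvec[symmetric] matrix_vector_mult_diff_distrib)
  moreover have "\<forall>j. 0 \<le> (x - rvec k)$j \<and> (x - rvec k)$j < 1"
    by (simp add: k_def) linarith
  ultimately have "m - A *v k \<in> NN A" unfolding NN_def by blast
  then show ?thesis by (intro exI[of _ "m - A *v k"]) simp
qed

lemma remd_mem_NN_and_diff_mem_LAT:
  fixes A :: "int^'n^'n"
  assumes d: "det A \<noteq> 0"
  shows "remd m A \<in> NN A \<and> m - remd m A \<in> LAT A"
  unfolding remd_def
proof (rule theI')
  obtain r where r: "r \<in> NN A" "m - r \<in> LAT A" using exists_NN_representative[OF d] by blast
  moreover have "r' = r" if "r' \<in> NN A" "m - r' \<in> LAT A" for r'
    using NN_eq_if_diff_mem_LAT[OF d that(1) r(1)] LAT_diff[OF r(2) that(2)] by simp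
  ultimately show "\<exists>!r. r \<in> NN A \<and> m - r \<in> LAT A" by blast
qed

lemma floor_coords_eq:
  fixes A :: "int^'n^'n"
  assumes d: "det A \<noteq> 0" and r: "r \<in> NN A"
  shows "(\<chi> j. \<lfloor>(matrix_inv (rmat A) *v rvec (A *v n + r)) $ j\<rfloor>) = n"
proof -
  obtain f where f: "\<forall>j. 0 \<le> f$j \<and> f$j < 1" "rvec r = rmat A *v f"
    using r by (auto simp: NN_def)
  have "rvec (A *v n + r) = rmat A *v (rvec n + f)"
    by (simp add: rvec_add f(2) matrix_vector_right_distrib rmat_mult_rvec)
  then have "matrix_inv (rmat A) *v rvec (A *v n + r) = rvec n + f"
    by (simp add: matrix_inv_rmat_cancel[OF d])
  moreover have "\<lfloor>real_of_int (n$j) + f$j\<rfloor> = n$j" for j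
    using f(1) by (intro floor_unique) (auto simp: add.commute)
  ultimately show ?thesis by (simp add: vec_eq_iff)
qed

lemma matrix_vector_mult_mem_NN:
  assumes "n \<in> NN P"
  shows "G *v n \<in> NN (G ** P)"
proof -
  obtain x where x: "\<forall>j. 0 \<le> x$j \<and> x$j < 1" "rvec n = rmat P *v x"
    using assms by (auto simp: NN_def)
  have "rvec (G *v n) = rmat (G ** P) *v x"
    by (simp add: rmat_mult_rvec[symmetric] x(2) rmat_mult matrix_vector_mul_assoc)
  then show ?thesis using x(1) by (auto simp: NN_def)
qed

lemma LAT_mult_unimodular:
  assumes U: "unimodular U" and x: "x \<in> LAT P"
  shows "x \<in> LAT (P ** U)"
proof -
  obtain y where y: "x = P *v y" using x by (auto simp: LAT_def)
  obtain z where "U *v z = y" using unimodular_solvable[OF U] by blast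
  then have "x = (P ** U) *v z" using y by (simp flip: matrix_vector_mul_assoc)
  then show ?thesis by simp
qed

lemma NN_mprod_eq_if_congr_mod_all:
  fixes G :: "nat \<Rightarrow> int^'n^'n"
  assumes dG: "\<forall>i\<in>{a..b}. det (G i) \<noteq> 0"
    and comm: "\<forall>i\<in>{a..b}. \<forall>j\<in>{a..b}. i \<noteq> j \<longrightarrow> G i ** G j = G j ** G i"
    and cop: "\<forall>i\<in>{a..b}. \<forall>j\<in>{a..b}. i \<noteq> j \<longrightarrow> coprime_mat (G i) (G j)"
    and U: "unimodular U"
    and x: "x \<in> NN (mprod G a b ** U)" and y: "y \<in> NN (mprod G a b ** U)"
    and xy: "\<forall>i\<in>{a..b}. congr_mod x y (G i)"
  shows "x = y"
proof -
  have "x - y \<in> LAT (mprod G a b)"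
    using LAT_mprod_of_mem_all[OF dG] comm cop xy
    by (simp add: congr_mod_def coprime_mat_imp_coprime_mod_primes)
  then have "x - y \<in> LAT (mprod G a b ** U)" by (rule LAT_mult_unimodular[OF U])
  moreover have "det (mprod G a b ** U) \<noteq> 0"
    using det_mprod_nonzero[OF dG] U by (auto simp: det_mul unimodular_def)
  ultimately show ?thesis using NN_eq_if_diff_mem_LAT x y by blast
qed

section \<open>Closest lattice points\<close>

lemma is_norm_0: "is_norm nrm \<Longrightarrow> nrm 0 = 0"
  by (simp add: is_norm_def)

lemma is_norm_scaleR: "is_norm nrm \<Longrightarrow> nrm (a *\<^sub>R x) = \<bar>a\<bar> * nrm x"
  by (simp add: is_norm_def)

lemma is_norm_triangle: "is_norm nrm \<Longrightarrow> nrm (x + y) \<le> nrm x + nrm y"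
  by (simp add: is_norm_def)

lemma is_norm_minus: "is_norm nrm \<Longrightarrow> nrm (- x) = nrm x"
  using is_norm_scaleR[of nrm "-1" x] by simp

lemma is_norm_diff_le: "is_norm nrm \<Longrightarrow> nrm (x - y) \<le> nrm x + nrm y"
  using is_norm_triangle[of nrm x "- y"] is_norm_minus[of nrm y] by simp

lemma is_norm_nonneg: "is_norm nrm \<Longrightarrow> nrm x \<ge> 0"
  using is_norm_triangle[of nrm x "- x"] is_norm_minus[of nrm x] is_norm_0[of nrm] by simp

lemma is_norm_sum_le:
  assumes "is_norm nrm"
  shows "nrm (\<Sum>i\<in>S. f i) \<le> (\<Sum>i\<in>S. nrm (f i))"
proof (induct S rule: infinite_finite_induct)
  case (insert x F)
  then show ?case using is_norm_triangle[OF assms, of "f x" "sum f F"] by simp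
qed (simp_all add: is_norm_0[OF assms])

lemma is_norm_mean_le:
  assumes "is_norm nrm" and "finite S" "S \<noteq> {}" and "\<forall>i\<in>S. nrm (e i) \<le> \<tau>"
  shows "nrm ((1 / real (card S)) *\<^sub>R (\<Sum>i\<in>S. e i)) \<le> \<tau>"
proof -
  have c: "real (card S) > 0" using assms(2,3) by (simp add: card_gt_0_iff)
  have "nrm ((1 / real (card S)) *\<^sub>R (\<Sum>i\<in>S. e i)) = nrm (\<Sum>i\<in>S. e i) / real (card S)"
    using c by (simp add: is_norm_scaleR[OF assms(1)])
  also have "\<dots> \<le> (\<Sum>i\<in>S. nrm (e i)) / real (card S)"
    using c by (simp add: divide_right_mono is_norm_sum_le[OF assms(1)])
  also have "\<dots> \<le> \<tau>"
    using c sum_mono[of S "\<lambda>i. nrm (e i)" "\<lambda>_. \<tau>"] assms(4)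
    by (simp add: pos_divide_le_eq mult.commute)
  finally show ?thesis .
qed

lemma closest_map_mem_LAT:
  assumes "is_closest_map nrm M Q"
  obtains t where "Q w = rvec (M *v t)"
  using assms unfolding is_closest_map_def LAT_def by blast

lemma closest_map_eq_0_if_short:
  assumes n: "is_norm nrm" and Q: "is_closest_map nrm M Q" and w: "nrm w < lat_min nrm M / 2"
  shows "Q w = 0"
proof (rule ccontr)
  assume ne: "Q w \<noteq> 0"
  obtain t where t: "Q w = rvec (M *v t)" using closest_map_mem_LAT[OF Q] .
  have "nrm (Q w - w) \<le> nrm (rvec 0 - w)"
    using Q LAT_mult_vec[of M 0] unfolding is_closest_map_def by (metis matrix_vector_mult_0_right)
  then have "nrm (Q w) < lat_min nrm M"
    using is_norm_triangle[OF n, of "Q w - w" w] is_norm_minus[OF n, of w] w by simp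
  moreover have "lat_min nrm M \<le> nrm (Q w)"
    unfolding lat_min_def
  proof (rule cInf_lower)
    show "nrm (Q w) \<in> {nrm (rvec v) |v. v \<in> LAT M \<and> v \<noteq> 0}" using t ne by force
    show "bdd_below {nrm (rvec v) |v. v \<in> LAT M \<and> v \<noteq> 0}"
      using is_norm_nonneg[OF n] by (intro bdd_belowI[of _ 0]) auto
  qed
  ultimately show False by simp
qed

lemma closest_map_eq_0_if_errors_le:
  assumes n: "is_norm nrm" and Q: "is_closest_map nrm M Q"
    and "nrm (rvec e) \<le> \<tau>" "nrm (rvec e') \<le> \<tau>" and "\<tau> < lat_min nrm M / 4"
  shows "Q (rvec (e - e')) = 0"
proof (rule closest_map_eq_0_if_short[OF n Q])
  have "nrm (rvec (e - e')) \<le> nrm (rvec e) + nrm (rvec e')"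
    by (simp add: rvec_diff is_norm_diff_le[OF n])
  then show "nrm (rvec (e - e')) < lat_min nrm M / 2" using assms(3-5) by simp
qed

lemma lat_coords_rvec:
  fixes M :: "int^'n^'n"
  assumes "det M \<noteq> 0"
  shows "lat_coords M (rvec (M *v t)) = t"
  unfolding lat_coords_def
  using matrix_vector_mult_cancel_int[OF assms] by (intro the_equality) auto

lemma closest_map_eq_0_iff_lat_coords:
  fixes M :: "int^'n^'n"
  assumes dM: "det M \<noteq> 0" and QM: "is_closest_map nrm M Q"
  shows "Q w = 0 \<longleftrightarrow> lat_coords M (Q w) = 0"
proof -
  obtain t where t: "Q w = rvec (M *v t)" using closest_map_mem_LAT[OF QM] .
  have "M *v t = M *v 0 \<longleftrightarrow> t = 0" using matrix_vector_mult_cancel_int[OF dM] by auto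
  then show ?thesis using t by (simp add: lat_coords_rvec[OF dM])
qed

section \<open>Analysis of Algorithm 1\<close>

text \<open>The remainders differ by lattice points, so by translation equivariance of Q the vector v_i of
  step (i) is that lattice point shifted by Q applied to the error difference.\<close>

lemma lat_coords_alg_v:
  fixes M :: "int^'n^'n"
  assumes dM: "det M \<noteq> 0" and QM: "is_closest_map nrm M Q" and rs: "r i - r 1 = M *v s"
  shows "lat_coords M (alg_v Q rt i) = lat_coords M (Q (rvec ((rt i - r i) - (rt 1 - r 1)))) + s"
proof -
  define w where "w = rvec ((rt i - r i) - (rt 1 - r 1))"
  obtain t where t: "Q w = rvec (M *v t)" using closest_map_mem_LAT[OF QM] .
  have "rt i - rt 1 = ((rt i - r i) - (rt 1 - r 1)) + M *v s"
    by (simp add: rs[symmetric])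
  then have "alg_v Q rt i = Q (w + rvec (M *v s))"
    unfolding alg_v_def w_def by (metis rvec_add)
  also have "\<dots> = rvec (M *v (t + s))"
    using QM t by (simp add: is_closest_map_def matrix_vector_right_distrib rvec_add)
  moreover have "lat_coords M (Q w) = t" using t by (simp add: lat_coords_rvec[OF dM])
  ultimately show ?thesis by (simp add: lat_coords_rvec[OF dM] w_def)
qed

lemma alg_chi_eqI:
  fixes G :: "nat \<Rightarrow> int^'n^'n"
  assumes dG: "\<forall>i\<in>{1..L}. det (G i) \<noteq> 0"
    and comm: "\<forall>i\<in>{1..L}. \<forall>j\<in>{1..L}. i \<noteq> j \<longrightarrow> G i ** G j = G j ** G i"
    and cop: "\<forall>i\<in>{1..L}. \<forall>j\<in>{1..L}. i \<noteq> j \<longrightarrow> coprime_mat (G i) (G j)"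
    and U: "unimodular U1" and L: "L \<ge> 1"
    and chi: "chi \<in> NN (mprod G 1 L ** U1)" "congr_mod chi 0 (G 1)"
      "\<forall>i\<in>{2..L}. congr_mod chi (remd (lat_coords M (alg_v Q rt i)) (G i)) (G i)"
  shows "alg_chi Q M G L U1 rt = chi"
  unfolding alg_chi_def
proof (rule the_equality)
  fix c
  assume c: "c \<in> NN (mprod G 1 L ** U1) \<and> congr_mod c 0 (G 1) \<and>
    (\<forall>i\<in>{2..L}. congr_mod c (remd (lat_coords M (alg_v Q rt i)) (G i)) (G i))"
  have "congr_mod c chi (G i)" if "i \<in> {1..L}" for i
  proof (cases "i = 1")
    case True
    then show ?thesis using c chi(2) LAT_diff by (force simp: congr_mod_def)
  next
    case False
    then have "i \<in> {2..L}" using that by auto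
    then show ?thesis using c chi(3) LAT_diff unfolding congr_mod_def by fastforce
  qed
  then show "c = chi" using NN_mprod_eq_if_congr_mod_all[OF dG comm cop U] c chi(1) by blast
qed (use chi in blast)

lemma A1set_folding_vector_mem_NN:
  fixes M :: "int^'n^'n"
  assumes "m \<in> A1set M G L U1" and "det (M ** G 1) \<noteq> 0"
    and "r = remd m (M ** G 1)" and "m = (M ** G 1) *v n + r"
  shows "n \<in> NN (mprod G 2 L ** U1)"
proof -
  have "r \<in> NN (M ** G 1)" using remd_mem_NN_and_diff_mem_LAT assms(2,3) by blast
  then show ?thesis
    using assms(1,4) floor_coords_eq[OF assms(2)] by (simp add: A1set_def)
qed

lemma alg_chi_eq_folding_vector:
  fixes G :: "nat \<Rightarrow> int^'n^'n"
  assumes dG: "\<forall>i\<in>{1..L}. det (G i) \<noteq> 0"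
    and comm: "\<forall>i\<in>{1..L}. \<forall>j\<in>{1..L}. i \<noteq> j \<longrightarrow> G i ** G j = G j ** G i"
    and cop: "\<forall>i\<in>{1..L}. \<forall>j\<in>{1..L}. i \<noteq> j \<longrightarrow> coprime_mat (G i) (G j)"
    and U1: "unimodular U1" and L2: "L \<ge> 2" and n1: "n 1 \<in> NN (mprod G 2 L ** U1)"
    and v: "\<forall>i\<in>{2..L}. lat_coords M (alg_v Q rt i) = G 1 *v n 1 - G i *v n i"
  shows "alg_chi Q M G L U1 rt = G 1 *v n 1"
proof (rule alg_chi_eqI[OF dG comm cop U1])
  have "mprod G 1 L = G 1 ** mprod G 2 L"
    using L2 mprod_Cons[of 1 L G] by (simp add: numeral_2_eq_2)
  then show "G 1 *v n 1 \<in> NN (mprod G 1 L ** U1)"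
    using matrix_vector_mult_mem_NN[OF n1, of "G 1"] by (simp add: matrix_mul_assoc)
  show "congr_mod (G 1 *v n 1) 0 (G 1)" by (simp add: congr_mod_def)
  show "\<forall>i\<in>{2..L}. congr_mod (G 1 *v n 1) (remd (lat_coords M (alg_v Q rt i)) (G i)) (G i)"
  proof
    fix i assume i: "i \<in> {2..L}"
    define s where "s = G 1 *v n 1 - G i *v n i"
    have "det (G i) \<noteq> 0" using dG i by auto
    then have "s - remd s (G i) + G i *v n i \<in> LAT (G i)"
      using remd_mem_NN_and_diff_mem_LAT LAT_add LAT_mult_vec by blast
    moreover have "s - remd s (G i) + G i *v n i = G 1 *v n 1 - remd s (G i)"
      by (simp add: s_def)
    ultimately show "congr_mod (G 1 *v n 1) (remd (lat_coords M (alg_v Q rt i)) (G i)) (G i)"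
      using v i by (simp add: congr_mod_def s_def)
  qed
qed (use L2 in simp)

lemma alg1_correct_iff:
  fixes Q :: "real^'n \<Rightarrow> real^'n" and M U1 :: "int^'n^'n" and G :: "nat \<Rightarrow> int^'n^'n"
    and m :: "int^'n" and r n rt :: "nat \<Rightarrow> int^'n"
  assumes QM: "is_closest_map nrm M Q" and dM: "det M \<noteq> 0" and L2: "L \<ge> 2"
    and dG: "\<forall>i\<in>{1..L}. det (G i) \<noteq> 0"
    and comm: "\<forall>i\<in>{1..L}. \<forall>j\<in>{1..L}. i \<noteq> j \<longrightarrow> G i ** G j = G j ** G i"
    and cop: "\<forall>i\<in>{1..L}. \<forall>j\<in>{1..L}. i \<noteq> j \<longrightarrow> coprime_mat (G i) (G j)"
    and U1: "unimodular U1" and n1: "n 1 \<in> NN (mprod G 2 L ** U1)"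
    and ndef: "\<forall>i\<in>{1..L}. m = (M ** G i) *v n i + r i"
  shows "(\<forall>i\<in>{1..L}. alg1 Q M G L U1 rt i = rvec (n i)) \<longleftrightarrow>
    (\<forall>i\<in>{2..L}. Q (rvec ((rt i - r i) - (rt 1 - r 1))) = 0)"
proof -
  define s where "s i = G 1 *v n 1 - G i *v n i" for i
  define theta where "theta i = lat_coords M (Q (rvec ((rt i - r i) - (rt 1 - r 1))))" for i
  define chi where "chi = alg_chi Q M G L U1 rt"
  define ell where "ell i = lat_coords M (alg_v Q rt i)" for i
  have L1: "1 \<in> {1..L}" using L2 by simp
  have ell: "ell i = theta i + s i" if "i \<in> {1..L}" for i
  proof -
    have "(M ** G i) *v n i + r i = (M ** G 1) *v n 1 + r 1" using ndef that L1 by metis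
    then have "r i - r 1 = M *v s i"
      by (simp add: s_def matrix_vector_mult_diff_distrib matrix_vector_mul_assoc algebra_simps)
    then show ?thesis unfolding ell_def theta_def by (rule lat_coords_alg_v[OF dM QM])
  qed
  have alg1_eq_iff: "alg1 Q M G L U1 rt i = rvec (n i) \<longleftrightarrow>
      (if i = 1 then chi = G 1 *v n 1 else chi - ell i = G i *v n i)" if "i \<in> {1..L}" for i
  proof -
    have "det (G i) \<noteq> 0" using dG that by blast
    then show ?thesis
      using matrix_inv_rmat_eq_rvec_iff by (cases "i = 1") (simp_all add: alg1_def chi_def ell_def)
  qed
  show ?thesis
  proof
    assume correct: "\<forall>i\<in>{1..L}. alg1 Q M G L U1 rt i = rvec (n i)"
    then have chi1: "chi = G 1 *v n 1" using alg1_eq_iff[OF L1] L1 by simp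
    show "\<forall>i\<in>{2..L}. Q (rvec ((rt i - r i) - (rt 1 - r 1))) = 0"
    proof
      fix i assume "i \<in> {2..L}"
      then have i: "i \<in> {1..L}" "i \<noteq> 1" by auto
      then have "chi - ell i = G i *v n i" using correct alg1_eq_iff by simp
      then have "theta i = 0" using chi1 ell[OF i(1)] by (simp add: s_def algebra_simps)
      then show "Q (rvec ((rt i - r i) - (rt 1 - r 1))) = 0"
        by (simp add: theta_def closest_map_eq_0_iff_lat_coords[OF dM QM])
    qed
  next
    assume "\<forall>i\<in>{2..L}. Q (rvec ((rt i - r i) - (rt 1 - r 1))) = 0"
    then have "\<forall>i\<in>{2..L}. ell i = s i"
      using ell by (simp add: theta_def closest_map_eq_0_iff_lat_coords[OF dM QM])
    then have "chi = G 1 *v n 1"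
      unfolding chi_def ell_def s_def by (rule alg_chi_eq_folding_vector[where n = n, OF dG comm cop U1 L2 n1])
    then show "\<forall>i\<in>{1..L}. alg1 Q M G L U1 rt i = rvec (n i)"
      using \<open>\<forall>i\<in>{2..L}. ell i = s i\<close> alg1_eq_iff by (auto simp: s_def)
  qed
qed

lemma averaged_estimate_error_le:
  fixes M :: "int^'n^'n"
  assumes n: "is_norm nrm" and L: "L \<ge> 1"
    and ndef: "\<forall>i\<in>{1..L}. m = (M ** G i) *v n i + r i"
    and x: "\<forall>i\<in>{1..L}. x i = rvec (n i)"
    and bound: "\<forall>i\<in>{1..L}. nrm (rvec (rt i - r i)) \<le> \<tau>"
  shows "nrm ((1 / real L) *\<^sub>R (\<Sum>i\<in>{1..L}. rmat (M ** G i) *v x i + rvec (rt i)) - rvec m) \<le> \<tau>"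
proof -
  have "rmat (M ** G i) *v x i + rvec (rt i) = rvec m + rvec (rt i - r i)" if "i \<in> {1..L}" for i
    using x ndef that by (simp add: rmat_mult_rvec rvec_add rvec_diff)
  then have "(\<Sum>i\<in>{1..L}. rmat (M ** G i) *v x i + rvec (rt i))
      = real L *\<^sub>R rvec m + (\<Sum>i\<in>{1..L}. rvec (rt i - r i))"
    by (simp add: sum.distrib sum_constant_scaleR del: sum_constant)
  then have "(1 / real L) *\<^sub>R (\<Sum>i\<in>{1..L}. rmat (M ** G i) *v x i + rvec (rt i)) - rvec m
      = (1 / real (card {1..L})) *\<^sub>R (\<Sum>i\<in>{1..L}. rvec (rt i - r i))"
    using L by (simp add: scaleR_add_right)
  then show ?thesis using is_norm_mean_le[OF n _ _ bound] L by simp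
qed

theorem theorem3:
  fixes nrm :: "real^'d \<Rightarrow> real"
    and Q :: "real^'d \<Rightarrow> real^'d"
    and M U1 :: "int^'d^'d"
    and G :: "nat \<Rightarrow> int^'d^'d"
    and L :: nat
    and m :: "int^'d"
    and r n rt :: "nat \<Rightarrow> int^'d"
  assumes norm: "is_norm nrm"
    and QM: "is_closest_map nrm M Q"
    and L2: "L \<ge> 2"
    and Mns: "nonsingular M"
    and Gns: "\<forall>i\<in>{1..L}. nonsingular (G i)"
    and Gcomm: "\<forall>i\<in>{1..L}. \<forall>j\<in>{1..L}. i \<noteq> j \<longrightarrow> G i ** G j = G j ** G i"
    and Gcop: "\<forall>i\<in>{1..L}. \<forall>j\<in>{1..L}. i \<noteq> j \<longrightarrow> coprime_mat (G i) (G j)"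
    and U1: "unimodular U1"
    and mA: "m \<in> A1set M G L U1"
    and rdef: "\<forall>i\<in>{1..L}. r i = remd m (M ** G i)"
    and ndef: "\<forall>i\<in>{1..L}. m = (M ** G i) *v n i + r i"
  shows "((\<forall>i\<in>{1..L}. alg1 Q M G L U1 rt i = rvec (n i)) \<longleftrightarrow>
            (\<forall>i\<in>{2..L}. Q (rvec ((rt i - r i) - (rt 1 - r 1))) = 0))
       \<and> ((\<forall>i\<in>{2..L}. nrm (rvec ((rt i - r i) - (rt 1 - r 1))) < lat_min nrm M / 2) \<longrightarrow>
            (\<forall>i\<in>{2..L}. Q (rvec ((rt i - r i) - (rt 1 - r 1))) = 0))
       \<and> (\<forall>\<tau>::real. (\<forall>i\<in>{1..L}. nrm (rvec (rt i - r i)) \<le> \<tau>) \<and> \<tau> < lat_min nrm M / 4 \<longrightarrow>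
            (\<forall>i\<in>{2..L}. Q (rvec ((rt i - r i) - (rt 1 - r 1))) = 0))
       \<and> (\<forall>\<tau>::real. (\<forall>i\<in>{1..L}. alg1 Q M G L U1 rt i = rvec (n i)) \<and>
            (\<forall>i\<in>{1..L}. nrm (rvec (rt i - r i)) \<le> \<tau>) \<longrightarrow>
            nrm ((1 / real L) *\<^sub>R (\<Sum>i\<in>{1..L}. rmat (M ** G i) *v alg1 Q M G L U1 rt i + rvec (rt i))
                 - rvec m) \<le> \<tau>)"
proof -
  have dM: "det M \<noteq> 0" using Mns by (simp add: nonsingular_def)
  have dG: "\<forall>i\<in>{1..L}. det (G i) \<noteq> 0" using Gns by (simp add: nonsingular_def)
  have L1: "1 \<in> {1..L}" using L2 by simp
  have "n 1 \<in> NN (mprod G 2 L ** U1)"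
    using A1set_folding_vector_mem_NN[OF mA _ rdef[rule_format, OF L1] ndef[rule_format, OF L1]]
      dM dG L1 by (simp add: det_mul)
  then have correct_iff: "(\<forall>i\<in>{1..L}. alg1 Q M G L U1 rt i = rvec (n i)) \<longleftrightarrow>
      (\<forall>i\<in>{2..L}. Q (rvec ((rt i - r i) - (rt 1 - r 1))) = 0)"
    by (rule alg1_correct_iff[OF QM dM L2 dG Gcomm Gcop U1 _ ndef])
  let ?w = "\<lambda>i. rvec ((rt i - r i) - (rt 1 - r 1))" and ?e = "\<lambda>i. rvec (rt i - r i)"
  show ?thesis
  proof (rule conjI[OF correct_iff], intro conjI allI impI ballI)
    fix i assume "\<forall>i\<in>{2..L}. nrm (?w i) < lat_min nrm M / 2" and "i \<in> {2..L}"
    then show "Q (?w i) = 0" by (simp add: closest_map_eq_0_if_short[OF norm QM])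
  next
    fix \<tau> i assume "(\<forall>i\<in>{1..L}. nrm (?e i) \<le> \<tau>) \<and> \<tau> < lat_min nrm M / 4" and "i \<in> {2..L}"
    then show "Q (?w i) = 0"
      using L1 by (intro closest_map_eq_0_if_errors_le[OF norm QM, where \<tau> = \<tau>]) auto
  next
    fix \<tau>
    assume "(\<forall>i\<in>{1..L}. alg1 Q M G L U1 rt i = rvec (n i)) \<and> (\<forall>i\<in>{1..L}. nrm (?e i) \<le> \<tau>)"
    then show "nrm ((1 / real L) *\<^sub>R
        (\<Sum>i\<in>{1..L}. rmat (M ** G i) *v alg1 Q M G L U1 rt i + rvec (rt i)) - rvec m) \<le> \<tau>"
      using L2 by (intro averaged_estimate_error_le[OF norm _ ndef]) auto
  qed
qed

end
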